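(* Let $S$ be a finite set and $\mu\colon\mathscr P(S)\to\mathbf Z$ a submodular, non-decreasing function on its power set. Let $P_\mu=\{\mathbf x\in\mathbf R^S\mid \mathbf x\ge\mathbf 0,\ \mathbf x\cdot\mathbf i_U\le\mu(U)\text{ for all }U\subset S\}$ and $B_\mu=\{\mathbf x\in P_\mu\mid \mathbf x\cdot\mathbf i_S=\mu(S)\}$. Write $I_\mu(\xi)=\sum_{j=0}^{|S|-1}a_j\xi^j$ and $X_\mu(\eta)=\sum_{j=0}^{|S|-1}b_j\eta^j$. Then for every non-negative integer $k$, \[\bigl|(B_\mu+k\nabla_S)\cap\mathbf Z^S\bigr|=\sum_{j=0}^{|S|-1}a_j\binom{k+|S|-1-j}{|S|-1-j},\qquad \bigl|(B_\mu+k\Delta_S)\cap\mathbf Z^S\bigr|=\sum_{j=0}^{|S|-1}b_j\binom{k+|S|-1-j}{|S|-1-j}.\]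
   Context: $\mathbf i_U\in\mathbf R^S$ denotes the indicator vector of $U\subset S$; $+$ between sets is Minkowski sum. $\Delta_S=\operatorname{conv}\{\mathbf i_{\{s\}}\mid s\in S\}$ is the standard simplex and $\nabla_S=-\Delta_S=\operatorname{conv}\{-\mathbf i_{\{s\}}\mid s\in S\}$ the inverted simplex. The bases of $\mu$ are the integer points of $B_\mu$. Fix a linear order on $S$. For a basis $\mathbf f$, an element $s\in S$ is internally active if there is no $s'<s$ such that $\mathbf f-\mathbf i_{\{s\}}+\mathbf i_{\{s'\}}$ is a basis, and externally active if there is no $s'<s$ such that $\mathbf f+\mathbf i_{\{s\}}-\mathbf i_{\{s'\}}$ is a basis. Let $\bar\iota(\mathbf f)$, resp. $\bar\epsilon(\mathbf f)$, be $|S|$ minus the number of internally, resp. externally, active elements. The interior and exterior polynomials are $I_\mu(\xi)=\sum_{\mathbf f}\xi^{\bar\iota(\mathbf f)}$ and $X_\mu(\eta)=\sum_{\mathbf f}\eta^{\bar\epsilon(\mathbf f)}$, summed over all bases $\mathbf f$ (their degrees are at most $|S|-1$). *)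

theory Defs
  imports "HOL-Analysis.Analysis" "HOL-Computational_Algebra.Polynomial"
begin

text \<open>The finite ground set S with its fixed linear order is rendered as a finite
  linearly ordered type 'a; R^S is real^'a and Z^S the integer points in it.\<close>

definition ind :: "'a::finite set \<Rightarrow> real^'a" where
  "ind U = (\<chi> s. if s \<in> U then 1 else 0)"

definition minkowski :: "(real^'a::finite) set \<Rightarrow> ((real, 'a) vec) set \<Rightarrow> ((real, 'a) vec) set" where
  "minkowski A B = {a + b | a b. a \<in> A \<and> b \<in> B}"

definition std_simplex :: "(real^'a::finite) set" where
  "std_simplex = convex hull (range (\<lambda>s. ind {s}))"

definition inv_simplex :: "(real^'a::finite) set" where
  "inv_simplex = convex hull (range (\<lambda>s. - ind {s}))"

definition integer_points :: "(real^'a::finite) set \<Rightarrow> ((real, 'a) vec) set" where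
  "integer_points A = {x \<in> A. \<forall>s. x $ s \<in> \<int>}"

definition P_mu :: "('a::finite set \<Rightarrow> int) \<Rightarrow> ((real, 'a) vec) set" where
  "P_mu \<mu> = {x. (\<forall>s. 0 \<le> x $ s) \<and> (\<forall>U. x \<bullet> ind U \<le> of_int (\<mu> U))}"

definition B_mu :: "('a::finite set \<Rightarrow> int) \<Rightarrow> ((real, 'a) vec) set" where
  "B_mu \<mu> = {x \<in> P_mu \<mu>. x \<bullet> ind UNIV = of_int (\<mu> UNIV)}"

definition bases :: "('a::finite set \<Rightarrow> int) \<Rightarrow> ((real, 'a) vec) set" where
  "bases \<mu> = integer_points (B_mu \<mu>)"

definition int_active :: "('a::{finite,linorder} set \<Rightarrow> int) \<Rightarrow> ((real, 'a) vec) \<Rightarrow> 'a \<Rightarrow> bool" where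
  "int_active \<mu> f s = (\<not> (\<exists>s'. s' < s \<and> f - ind {s} + ind {s'} \<in> bases \<mu>))"

definition ext_active :: "('a::{finite,linorder} set \<Rightarrow> int) \<Rightarrow> ((real, 'a) vec) \<Rightarrow> 'a \<Rightarrow> bool" where
  "ext_active \<mu> f s = (\<not> (\<exists>s'. s' < s \<and> f + ind {s} - ind {s'} \<in> bases \<mu>))"

definition iota_bar :: "('a::{finite,linorder} set \<Rightarrow> int) \<Rightarrow> ((real, 'a) vec) \<Rightarrow> nat" where
  "iota_bar \<mu> f = CARD('a) - card {s. int_active \<mu> f s}"

definition eps_bar :: "('a::{finite,linorder} set \<Rightarrow> int) \<Rightarrow> ((real, 'a) vec) \<Rightarrow> nat" where
  "eps_bar \<mu> f = CARD('a) - card {s. ext_active \<mu> f s}"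

definition interior_poly :: "('a::{finite,linorder} set \<Rightarrow> int) \<Rightarrow> int poly" where
  "interior_poly \<mu> = (\<Sum>f\<in>bases \<mu>. monom 1 (iota_bar \<mu> f))"

definition exterior_poly :: "('a::{finite,linorder} set \<Rightarrow> int) \<Rightarrow> int poly" where
  "exterior_poly \<mu> = (\<Sum>f\<in>bases \<mu>. monom 1 (eps_bar \<mu> f))"

end

(*
  An integer point of B_mu + k Delta is an integer vector h of total mu(S) + k lying above a point
  of B_mu; by box-integrality of polymatroids it then lies above an integer base. The bases form
  a set with the exchange property, and every such h decomposes uniquely as h = f + c with f a
  base and c >= 0 supported on the externally active elements of f: existence by taking f of
  maximal potential sum_s f(s) * #{t < s}, uniqueness by exchanging at the first coordinate where
  two decompositions differ. Counting the c gives binomial((k + e(f) - 1), k) for e(f) externally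
  active elements, which is the stated transform of the exterior polynomial. Negating everything
  turns B_mu + k Nabla into the same problem for the set -bases(mu), in which external activity of
  -f is internal activity of f; this gives the interior polynomial.
*)

theory Submission
  imports Defs "HOL-Library.Function_Algebras"
begin

definition of_int_vec :: "('a::finite \<Rightarrow> int) \<Rightarrow> real^'a" where
  "of_int_vec h = (\<chi> s. of_int (h s))"

lemma of_int_vec_nth [simp]: "of_int_vec h $ s = of_int (h s)"
  by (simp add: of_int_vec_def)

lemma of_int_vec_eq_iff [simp]: "of_int_vec f = of_int_vec g \<longleftrightarrow> f = g"
  by (auto simp: vec_eq_iff fun_eq_iff)

lemma inj_of_int_vec: "inj of_int_vec"
  by (rule injI) simp

lemma of_int_vec_add: "of_int_vec (f + g) = of_int_vec f + of_int_vec g"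
  and of_int_vec_diff: "of_int_vec (f - g) = of_int_vec f - of_int_vec g"
  and of_int_vec_indicator: "of_int_vec (indicator {s}) = ind {s}"
  by (auto simp: vec_eq_iff ind_def)

lemma integer_points_eq_image: "integer_points A = of_int_vec ` {h. of_int_vec h \<in> A}"
proof (intro equalityI subsetI)
  fix x assume x: "x \<in> integer_points A"
  then have "x = of_int_vec (\<lambda>s. \<lfloor>x $ s\<rfloor>)"
    by (auto simp: integer_points_def vec_eq_iff elim!: Ints_cases)
  with x show "x \<in> of_int_vec ` {h. of_int_vec h \<in> A}"
    by (auto simp: integer_points_def)
qed (auto simp: integer_points_def)

lemma inner_ind: "x \<bullet> ind U = (\<Sum>s\<in>U. x $ s)"
  unfolding inner_vec_def ind_def by (simp add: if_distrib sum.If_cases)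

lemma mem_uminus_image_iff: "x \<in> uminus ` A \<longleftrightarrow> - x \<in> A"
  for x :: "'b::group_add"
  by (metis image_iff minus_minus)

lemma finite_int_box: "finite {f :: 'a::finite \<Rightarrow> int. \<forall>s. l s \<le> f s \<and> f s \<le> u s}"
proof -
  have "{f. \<forall>s. l s \<le> f s \<and> f s \<le> u s} = Pi\<^sub>E UNIV (\<lambda>s. {l s..u s})"
    by (auto simp: PiE_UNIV_domain)
  then show ?thesis
    by (simp add: finite_PiE)
qed

lemma sum_indicator_singleton:
  "finite U \<Longrightarrow> sum (indicator {a}) U = (of_bool (a \<in> U) :: 'b::comm_semiring_1)"
  by (simp add: indicator_def sum.If_cases)

lemma ex_less_if_sum_le:
  fixes f g :: "'a \<Rightarrow> 'b::{ordered_cancel_comm_monoid_add, linorder}"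
  assumes "finite X" "a \<in> X" "g a < f a" "sum f X \<le> sum g X"
  shows "\<exists>b\<in>X. f b < g b"
proof (rule ccontr)
  assume "\<not> ?thesis"
  then have "\<forall>b\<in>X. g b \<le> f b"
    by (meson not_le)
  then have "sum g X < sum f X"
    using assms(1-3) by (intro sum_strict_mono_ex1) auto
  with assms(4) show False by simp
qed

lemma sum_Compl_split:
  fixes g :: "'a::finite \<Rightarrow> 'b::comm_monoid_add"
  shows "sum g W + sum g (- W) = sum g UNIV"
  by (simp add: Compl_partition flip: sum.union_disjoint)

section \<open>Lattice points above a set with the exchange property\<close>

definition exchange_property :: "('a \<Rightarrow> int) set \<Rightarrow> bool" where
  "exchange_property \<B> \<longleftrightarrow> (\<forall>f\<in>\<B>. \<forall>g\<in>\<B>. \<forall>a. g a < f a \<longrightarrow>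
     (\<exists>b. f b < g b \<and> f - indicator {a} + indicator {b} \<in> \<B>))"

definition externally_active :: "('a::linorder \<Rightarrow> int) set \<Rightarrow> ('a \<Rightarrow> int) \<Rightarrow> 'a \<Rightarrow> bool" where
  "externally_active \<B> f s \<longleftrightarrow> \<not> (\<exists>s'<s. f + indicator {s} - indicator {s'} \<in> \<B>)"

lemma externally_active_Min: "externally_active \<B> f (Min UNIV)"
  for f :: "'a::{finite,linorder} \<Rightarrow> int"
proof -
  have "Min UNIV \<le> s'" for s' :: 'a
    by (meson Min.coboundedI UNIV_I finite)
  then have "\<not> s' < Min UNIV" for s' :: 'a
    by (rule leD)
  then show ?thesis
    by (simp add: externally_active_def)
qed

lemma first_difference:
  fixes f g :: "'a::{finite,linorder} \<Rightarrow> 'b"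
  assumes "f \<noteq> g"
  obtains a where "f a \<noteq> g a" "\<forall>t<a. f t = g t"
proof -
  define D where "D = {s. f s \<noteq> g s}"
  have "D \<noteq> {}"
    using assms by (auto simp: D_def)
  then have "Min D \<in> D" "\<forall>t\<in>D. Min D \<le> t"
    by simp_all
  then show thesis
    by (intro that[of "Min D"]) (auto simp: D_def not_less[symmetric])
qed

lemma active_decomposition_first_difference:
  assumes exch: "exchange_property \<B>" and f: "f \<in> \<B>" and g: "g \<in> \<B>"
    and "g a < f a" and agree: "\<forall>t<a. f t = g t"
    and gh: "\<forall>s. g s \<le> h s" and f_active: "\<forall>s. f s < h s \<longrightarrow> externally_active \<B> f s"
  shows False
proof -
  from exch f g \<open>g a < f a\<close> obtain b
    where "f b < g b" and swap: "f - indicator {a} + indicator {b} \<in> \<B>"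
    unfolding exchange_property_def by blast
  have "\<not> b < a" "b \<noteq> a"
    using agree \<open>f b < g b\<close> \<open>g a < f a\<close> by auto
  then have "a < b"
    by simp
  moreover have "f b < h b"
    using gh \<open>f b < g b\<close> order.strict_trans2 by blast
  then have "externally_active \<B> f b"
    using f_active by blast
  moreover have "f + indicator {b} - indicator {a} \<in> \<B>"
    using swap by (simp only: diff_add_eq)
  ultimately show False
    unfolding externally_active_def by blast
qed

lemma active_decomposition_unique:
  fixes h :: "'a::{finite,linorder} \<Rightarrow> int"
  assumes exch: "exchange_property \<B>" and f: "f \<in> \<B>" and g: "g \<in> \<B>"
    and fh: "\<forall>s. f s \<le> h s" and gh: "\<forall>s. g s \<le> h s"
    and f_active: "\<forall>s. f s < h s \<longrightarrow> externally_active \<B> f s"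
    and g_active: "\<forall>s. g s < h s \<longrightarrow> externally_active \<B> g s"
  shows "f = g"
proof (rule ccontr)
  assume "f \<noteq> g"
  then obtain a where "f a \<noteq> g a" and agree: "\<forall>t<a. f t = g t"
    by (rule first_difference)
  then consider "g a < f a" | "f a < g a"
    by linarith
  then show False
  proof cases
    case 1
    from active_decomposition_first_difference[OF exch f g this agree gh f_active] show False .
  next
    case 2
    moreover have "\<forall>t<a. g t = f t"
      using agree by simp
    ultimately show False
      using active_decomposition_first_difference[OF exch g f _ _ fh g_active] by blast
  qed
qed

lemma exists_active_decomposition:
  fixes h :: "'a::{finite,linorder} \<Rightarrow> int"
  assumes "finite \<B>" and "\<exists>f\<in>\<B>. \<forall>s. f s \<le> h s"
  shows "\<exists>f\<in>\<B>. (\<forall>s. f s \<le> h s) \<and> (\<forall>s. f s < h s \<longrightarrow> externally_active \<B> f s)"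
proof -
  define A where "A = {f\<in>\<B>. \<forall>s. f s \<le> h s}"
  define rank where "rank s = int (card {t. t < s})" for s :: 'a
  define pot where "pot f = (\<Sum>s\<in>UNIV. f s * rank s)" for f :: "'a \<Rightarrow> int"
  have rank_mono: "rank s' < rank s" if "s' < s" for s s'
  proof -
    have "{t. t < s'} \<subset> {t. t < s}"
      using that by (auto simp: set_eq_iff dest: less_trans)
    then show ?thesis
      unfolding rank_def by (simp add: psubset_card_mono)
  qed
  have pot_move: "pot (f + indicator {s} - indicator {s'}) = pot f + rank s - rank s'" for f s s'
    by (simp add: pot_def algebra_simps sum.distrib sum_subtractf indicator_def if_distrib
        cong: if_cong)
  \<comment> \<open>moving a unit from \<open>s'\<close> to a later \<open>s\<close> raises the potential, so a potential-maximal
    base below \<open>h\<close> admits no such move where it lies strictly below \<open>h\<close>\<close>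
  have "finite A" "A \<noteq> {}"
    using assms by (auto simp: A_def)
  then obtain f where "f \<in> A" and f_max: "\<forall>g\<in>A. \<not> pot f < pot g"
    using ex_is_arg_min_if_finite[of A "\<lambda>g. - pot g"] by (auto simp: is_arg_min_def)
  have "externally_active \<B> f s" if "f s < h s" for s
    unfolding externally_active_def
  proof
    assume "\<exists>s'<s. f + indicator {s} - indicator {s'} \<in> \<B>"
    then obtain s' where "s' < s" and moved: "f + indicator {s} - indicator {s'} \<in> \<B>"
      by blast
    have "(f + indicator {s} - indicator {s'}) t \<le> h t" for t
      using \<open>f \<in> A\<close> that by (cases "t = s") (auto simp: A_def indicator_def dest: spec[of _ t])
    with moved have "f + indicator {s} - indicator {s'} \<in> A"
      by (simp add: A_def)
    with f_max rank_mono[OF \<open>s' < s\<close>] show False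
      by (auto simp: pot_move)
  qed
  with \<open>f \<in> A\<close> show ?thesis
    by (auto simp: A_def)
qed

lemma ex_supported_int_fun_map_eq:
  assumes "distinct xs" "length l = length xs"
  obtains c :: "'a \<Rightarrow> int"
  where "map (\<lambda>s. nat (c s)) xs = l" "\<forall>s. 0 \<le> c s" "\<forall>s. c s \<noteq> 0 \<longrightarrow> s \<in> set xs"
proof -
  define c where "c s = (if s \<in> set xs then int (the (map_of (zip xs l) s)) else 0)" for s
  have "map (\<lambda>s. nat (c s)) xs = l"
  proof (rule nth_equalityI)
    fix i assume "i < length (map (\<lambda>s. nat (c s)) xs)"
    then have "i < length xs"
      by simp
    moreover have "map_of (zip xs l) (xs ! i) = Some (l ! i)"
      using map_of_zip_nth[of xs l i] assms \<open>i < length xs\<close> by simp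
    ultimately show "map (\<lambda>s. nat (c s)) xs ! i = l ! i"
      by (simp add: c_def)
  qed (use assms in simp)
  then show thesis
    by (rule that) (simp_all add: c_def)
qed

lemma sum_list_map_nat_supported:
  fixes c :: "'a::finite \<Rightarrow> int"
  assumes "distinct xs" "\<forall>s. 0 \<le> c s" "\<forall>s. c s \<noteq> 0 \<longrightarrow> s \<in> set xs"
  shows "int (sum_list (map (\<lambda>s. nat (c s)) xs)) = sum c UNIV"
proof -
  have "sum c UNIV = sum c (set xs)"
    using assms(3) by (intro sum.mono_neutral_right) auto
  with assms(1,2) show ?thesis
    by (simp add: sum_list_distinct_conv_sum_set of_nat_sum)
qed

lemma supported_eq_if_map_nat_eq:
  fixes c d :: "'a \<Rightarrow> int"
  assumes "\<forall>s. 0 \<le> c s" "\<forall>s. c s \<noteq> 0 \<longrightarrow> s \<in> set xs" "\<forall>s. 0 \<le> d s" "\<forall>s. d s \<noteq> 0 \<longrightarrow> s \<in> set xs"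
    and "map (\<lambda>s. nat (c s)) xs = map (\<lambda>s. nat (d s)) xs"
  shows "c = d"
proof
  fix s
  show "c s = d s"
  proof (cases "s \<in> set xs")
    case True
    with assms(1,3,5) show ?thesis
      by (auto simp: map_eq_conv nat_eq_iff2)
  next
    case False
    with assms(2,4) have "c s = 0" "d s = 0"
      by blast+
    then show ?thesis
      by simp
  qed
qed

lemma card_nonneg_int_funs_supported:
  fixes A :: "'a::finite set"
  shows "card {c::'a \<Rightarrow> int. (\<forall>s. 0 \<le> c s) \<and> (\<forall>s. c s \<noteq> 0 \<longrightarrow> s \<in> A) \<and> sum c UNIV = int k}
         = (k + card A - 1) choose k"
proof -
  obtain xs where xs: "distinct xs" "set xs = A"
    using finite_distinct_list[of A] by auto
  define C where "C = {c::'a \<Rightarrow> int. (\<forall>s. 0 \<le> c s) \<and> (\<forall>s. c s \<noteq> 0 \<longrightarrow> s \<in> set xs) \<and> sum c UNIV = int k}"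
  define L where "L = {l::nat list. length l = length xs \<and> sum_list l = k}"
  define \<phi> where "\<phi> c = map (\<lambda>s. nat (c s)) xs" for c :: "'a \<Rightarrow> int"
  have "inj_on \<phi> C"
    by (rule inj_onI) (auto simp: C_def \<phi>_def intro: supported_eq_if_map_nat_eq)
  moreover have "\<phi> ` C = L"
  proof (intro equalityI subsetI)
    fix l assume "l \<in> \<phi> ` C"
    then obtain c where "c \<in> C" "l = \<phi> c"
      by blast
    with sum_list_map_nat_supported[OF xs(1), of c] show "l \<in> L"
      by (simp add: C_def L_def \<phi>_def)
  next
    fix l assume l: "l \<in> L"
    then obtain c where "map (\<lambda>s. nat (c s)) xs = l" "\<forall>s. 0 \<le> c s" "\<forall>s. c s \<noteq> 0 \<longrightarrow> s \<in> set xs"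
      by (auto simp: L_def intro: ex_supported_int_fun_map_eq[OF xs(1)])
    moreover from this have "\<phi> c = l" "c \<in> C"
      using l sum_list_map_nat_supported[OF xs(1), of c] by (auto simp: \<phi>_def C_def L_def)
    ultimately show "l \<in> \<phi> ` C"
      by (metis image_eqI)
  qed
  ultimately have "card C = card L"
    by (metis card_image)
  also have "\<dots> = (k + card A - 1) choose k"
    unfolding L_def using xs by (simp add: card_length_sum_list flip: distinct_card)
  finally show ?thesis
    by (simp add: C_def xs(2))
qed

definition active_shifts :: "('a::linorder \<Rightarrow> int) set \<Rightarrow> ('a \<Rightarrow> int) \<Rightarrow> nat \<Rightarrow> ('a \<Rightarrow> int) set" where
  "active_shifts \<B> f k = {c. (\<forall>s. 0 \<le> c s) \<and> (\<forall>s. c s \<noteq> 0 \<longrightarrow> externally_active \<B> f s) \<and> sum c UNIV = int k}"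

lemma card_active_shifts:
  "card (active_shifts \<B> f k) = (k + card {s. externally_active \<B> f s} - 1) choose k"
  for f :: "'a::{finite,linorder} \<Rightarrow> int"
  using card_nonneg_int_funs_supported[of "{s. externally_active \<B> f s}" k]
  by (simp add: active_shifts_def)

lemma finite_active_shifts: "finite (active_shifts \<B> f k)"
  for f :: "'a::{finite,linorder} \<Rightarrow> int"
proof (rule finite_subset[OF _ finite_int_box])
  show "active_shifts \<B> f k \<subseteq> {c. \<forall>s. 0 \<le> c s \<and> c s \<le> int k}"
  proof
    fix c assume "c \<in> active_shifts \<B> f k"
    then have "\<forall>s. 0 \<le> c s" "sum c UNIV = int k"
      by (simp_all add: active_shifts_def)
    then show "c \<in> {c. \<forall>s. 0 \<le> c s \<and> c s \<le> int k}"
      using member_le_sum[of _ UNIV c] by auto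
  qed
qed

lemma bij_betw_add_active_shifts:
  fixes \<B> :: "('a::{finite,linorder} \<Rightarrow> int) set"
  assumes exch: "exchange_property \<B>" and "finite \<B>" and total: "\<forall>f\<in>\<B>. sum f UNIV = r"
  shows "bij_betw (\<lambda>(f, c). f + c) (SIGMA f:\<B>. active_shifts \<B> f k)
           {h. (\<exists>f\<in>\<B>. \<forall>s. f s \<le> h s) \<and> sum h UNIV = r + int k}"
    (is "bij_betw ?add ?S ?H")
proof -
  have shift: "\<forall>s. f s \<le> (f + c) s" "\<forall>s. f s < (f + c) s \<longrightarrow> externally_active \<B> f s"
    if "c \<in> active_shifts \<B> f k" for f c
    using that by (auto simp: active_shifts_def)
  have "inj_on ?add ?S"
  proof (rule inj_onI, clarsimp)
    fix f c g d
    assume "f \<in> \<B>" "c \<in> active_shifts \<B> f k" "g \<in> \<B>" "d \<in> active_shifts \<B> g k"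
      and sum_eq: "f + c = g + d"
    with shift[of c f] shift[of d g] have "f = g"
      by (intro active_decomposition_unique[OF exch, of f g "f + c"]) simp_all
    with sum_eq show "f = g \<and> c = d"
      by simp
  qed
  moreover have "?add ` ?S = ?H"
  proof (intro equalityI subsetI)
    fix h assume "h \<in> ?add ` ?S"
    then obtain f c where "f \<in> \<B>" "c \<in> active_shifts \<B> f k" "h = f + c"
      by auto
    with total shift(1)[of c f] show "h \<in> ?H"
      by (auto simp: active_shifts_def sum.distrib intro!: bexI[of _ f])
  next
    fix h assume "h \<in> ?H"
    then obtain f where "f \<in> \<B>" "\<forall>s. f s \<le> h s" "\<forall>s. f s < h s \<longrightarrow> externally_active \<B> f s"
      using exists_active_decomposition[OF \<open>finite \<B>\<close>] by blast
    moreover from this \<open>h \<in> ?H\<close> have "h - f \<in> active_shifts \<B> f k"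
      using total by (auto simp: active_shifts_def sum_subtractf order.strict_iff_order)
    moreover have "h = ?add (f, h - f)"
      by simp
    ultimately show "h \<in> ?add ` ?S"
      by blast
  qed
  ultimately show ?thesis
    unfolding bij_betw_def ..
qed

lemma card_int_funs_above_exchange_set:
  fixes \<B> :: "('a::{finite,linorder} \<Rightarrow> int) set"
  assumes "exchange_property \<B>" and "finite \<B>" and "\<forall>f\<in>\<B>. sum f UNIV = r"
  shows "card {h. (\<exists>f\<in>\<B>. \<forall>s. f s \<le> h s) \<and> sum h UNIV = r + int k}
         = (\<Sum>f\<in>\<B>. (k + card {s. externally_active \<B> f s} - 1) choose k)"
  using bij_betw_same_card[OF bij_betw_add_active_shifts[OF assms]] \<open>finite \<B>\<close>
  by (simp add: finite_active_shifts card_active_shifts)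

lemma card_int_funs_below_exchange_set:
  fixes \<B> :: "('a::{finite,linorder} \<Rightarrow> int) set"
  assumes exch: "exchange_property (uminus ` \<B>)" and "finite \<B>" and total: "\<forall>f\<in>\<B>. sum f UNIV = r"
  shows "card {h. (\<exists>f\<in>\<B>. \<forall>s. h s \<le> f s) \<and> sum h UNIV = r - int k}
         = (\<Sum>f\<in>\<B>. (k + card {s. externally_active (uminus ` \<B>) (- f) s} - 1) choose k)"
proof -
  have "{h. (\<exists>f\<in>\<B>. \<forall>s. h s \<le> f s) \<and> sum h UNIV = r - int k}
      = uminus ` {h. (\<exists>f\<in>uminus ` \<B>. \<forall>s. f s \<le> h s) \<and> sum h UNIV = - r + int k}"
  proof (intro equalityI subsetI)
    fix h assume "h \<in> {h. (\<exists>f\<in>\<B>. \<forall>s. h s \<le> f s) \<and> sum h UNIV = r - int k}"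
    then have "- h \<in> {h. (\<exists>f\<in>uminus ` \<B>. \<forall>s. f s \<le> h s) \<and> sum h UNIV = - r + int k}"
      by (auto simp: sum_negf)
    then show "h \<in> uminus ` {h. (\<exists>f\<in>uminus ` \<B>. \<forall>s. f s \<le> h s) \<and> sum h UNIV = - r + int k}"
      by (rule image_eqI[rotated]) simp
  next
    fix h assume "h \<in> uminus ` {h. (\<exists>f\<in>uminus ` \<B>. \<forall>s. f s \<le> h s) \<and> sum h UNIV = - r + int k}"
    then obtain g f where "h = - g" "f \<in> \<B>" "\<forall>s. - f s \<le> g s" "sum g UNIV = - r + int k"
      by auto
    then show "h \<in> {h. (\<exists>f\<in>\<B>. \<forall>s. h s \<le> f s) \<and> sum h UNIV = r - int k}"
      by (auto simp: sum_negf minus_le_iff)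
  qed
  then have "card {h. (\<exists>f\<in>\<B>. \<forall>s. h s \<le> f s) \<and> sum h UNIV = r - int k}
      = card {h. (\<exists>f\<in>uminus ` \<B>. \<forall>s. f s \<le> h s) \<and> sum h UNIV = - r + int k}"
    by (simp add: card_image)
  also have "\<dots> = (\<Sum>f\<in>uminus ` \<B>. (k + card {s. externally_active (uminus ` \<B>) f s} - 1) choose k)"
    using total \<open>finite \<B>\<close> by (intro card_int_funs_above_exchange_set[OF exch]) (auto simp: sum_negf)
  also have "\<dots> = (\<Sum>f\<in>\<B>. (k + card {s. externally_active (uminus ` \<B>) (- f) s} - 1) choose k)"
    by (simp add: sum.reindex)
  finally show ?thesis .
qed

section \<open>Integer bases of a submodular function\<close>

definition int_independent :: "('a::finite set \<Rightarrow> int) \<Rightarrow> ('a \<Rightarrow> int) \<Rightarrow> bool" where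
  "int_independent \<mu> f \<longleftrightarrow> (\<forall>s. 0 \<le> f s) \<and> (\<forall>U. sum f U \<le> \<mu> U)"

definition int_bases :: "('a::finite set \<Rightarrow> int) \<Rightarrow> ('a \<Rightarrow> int) set" where
  "int_bases \<mu> = {f. int_independent \<mu> f \<and> sum f UNIV = \<mu> UNIV}"

lemma sum_int_bases: "f \<in> int_bases \<mu> \<Longrightarrow> sum f UNIV = \<mu> UNIV"
  by (simp add: int_bases_def)

lemma of_int_vec_in_B_mu_iff: "of_int_vec f \<in> B_mu \<mu> \<longleftrightarrow> f \<in> int_bases \<mu>"
  by (simp add: B_mu_def P_mu_def int_bases_def int_independent_def inner_ind
      flip: of_int_sum)

lemma bases_eq: "bases \<mu> = of_int_vec ` int_bases \<mu>"
  by (simp add: bases_def integer_points_eq_image of_int_vec_in_B_mu_iff)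

lemma of_int_vec_in_bases_iff: "of_int_vec f \<in> bases \<mu> \<longleftrightarrow> f \<in> int_bases \<mu>"
  by (auto simp: bases_eq)

definition tight :: "('a::finite set \<Rightarrow> int) \<Rightarrow> ('a \<Rightarrow> int) \<Rightarrow> 'a set \<Rightarrow> bool" where
  "tight \<mu> f U \<longleftrightarrow> sum f U = \<mu> U"

lemma tight_Un_Int:
  assumes submod: "\<forall>A B. \<mu> (A \<union> B) + \<mu> (A \<inter> B) \<le> \<mu> A + \<mu> B"
    and f: "int_independent \<mu> f" and A: "tight \<mu> f A" and B: "tight \<mu> f B"
  shows "tight \<mu> f (A \<union> B)" "tight \<mu> f (A \<inter> B)"
proof -
  have "sum f (A \<union> B) + sum f (A \<inter> B) = sum f A + sum f B"
    by (rule sum.union_inter) auto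
  moreover have "sum f (A \<union> B) \<le> \<mu> (A \<union> B)" "sum f (A \<inter> B) \<le> \<mu> (A \<inter> B)"
    using f by (auto simp: int_independent_def)
  ultimately show "tight \<mu> f (A \<union> B)" "tight \<mu> f (A \<inter> B)"
    using submod A B unfolding tight_def by (smt (verit))+
qed

lemma tight_Union_Inter:
  assumes submod: "\<forall>A B. \<mu> (A \<union> B) + \<mu> (A \<inter> B) \<le> \<mu> A + \<mu> B"
    and f: "int_independent \<mu> f" and "F \<noteq> {}" and "\<forall>U\<in>F. tight \<mu> f U"
  shows "tight \<mu> f (\<Union>F)" "tight \<mu> f (\<Inter>F)"
proof -
  have "finite F" by simp
  from this assms(3,4) have "tight \<mu> f (\<Union>F) \<and> tight \<mu> f (\<Inter>F)"
    by (induction F rule: finite_ne_induct) (auto intro: tight_Un_Int[OF submod f])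
  then show "tight \<mu> f (\<Union>F)" "tight \<mu> f (\<Inter>F)" by auto
qed

lemma int_bases_swap:
  assumes f: "f \<in> int_bases \<mu>" and "a \<noteq> b" and "1 \<le> f a"
    and slack: "\<forall>U. b \<in> U \<and> a \<notin> U \<longrightarrow> sum f U < \<mu> U"
  shows "f - indicator {a} + indicator {b} \<in> int_bases \<mu>"
proof -
  have sum_swap: "sum (f - indicator {a} + indicator {b}) U
      = sum f U - of_bool (a \<in> U) + of_bool (b \<in> U)" for U
    by (simp add: sum.distrib sum_subtractf sum_indicator_singleton)
  have "sum (f - indicator {a} + indicator {b}) U \<le> \<mu> U" for U
    using f slack[rule_format, of U] sum_swap[of U]
    by (cases "b \<in> U \<and> a \<notin> U") (auto simp: int_bases_def int_independent_def
        dest: spec[of _ U])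
  moreover have "0 \<le> (f - indicator {a} + indicator {b}) s" for s
    using f \<open>1 \<le> f a\<close> by (auto simp: int_bases_def int_independent_def indicator_def)
  ultimately show ?thesis
    using f sum_swap[of UNIV] by (simp add: int_bases_def int_independent_def)
qed

lemma exchange_property_int_bases:
  assumes submod: "\<forall>A B. \<mu> (A \<union> B) + \<mu> (A \<inter> B) \<le> \<mu> A + \<mu> B"
  shows "exchange_property (int_bases \<mu>)"
  unfolding exchange_property_def
proof (intro ballI allI impI)
  fix f g a assume f: "f \<in> int_bases \<mu>" and g: "g \<in> int_bases \<mu>" and "g a < f a"
  then have f_indep: "int_independent \<mu> f"
    by (simp add: int_bases_def)
  define W where "W = \<Union>{U. a \<notin> U \<and> tight \<mu> f U}"
  have W_max: "U \<subseteq> W" if "a \<notin> U" "tight \<mu> f U" for U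
    using that by (auto simp: W_def)
  have "sum g W \<le> sum f W"
  proof (cases "W = {}")
    case False
    then have "tight \<mu> f W"
      unfolding W_def by (intro tight_Union_Inter[OF submod f_indep]) auto
    then show ?thesis
      using g by (simp add: tight_def int_bases_def int_independent_def)
  qed simp
  moreover have "sum f W + sum f (- W) = sum g W + sum g (- W)"
    using f g by (simp add: int_bases_def sum_Compl_split)
  ultimately have "sum f (- W) \<le> sum g (- W)"
    by linarith
  moreover have "a \<in> - W"
    by (auto simp: W_def)
  ultimately obtain b where "b \<in> - W" "f b < g b"
    using ex_less_if_sum_le[of "- W" a g f, OF finite] \<open>g a < f a\<close> by blast
  moreover have "f - indicator {a} + indicator {b} \<in> int_bases \<mu>"
  proof (rule int_bases_swap[OF f])
    show "a \<noteq> b" "1 \<le> f a"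
      using \<open>f b < g b\<close> \<open>g a < f a\<close> g by (auto simp: int_bases_def int_independent_def
          dest: spec[of _ a])
    show "\<forall>U. b \<in> U \<and> a \<notin> U \<longrightarrow> sum f U < \<mu> U"
      using W_max \<open>b \<in> - W\<close> f
      by (force simp: tight_def int_bases_def int_independent_def order.order_iff_strict)
  qed
  ultimately show "\<exists>b. f b < g b \<and> f - indicator {a} + indicator {b} \<in> int_bases \<mu>"
    by blast
qed

lemma exchange_property_uminus_int_bases:
  assumes submod: "\<forall>A B. \<mu> (A \<union> B) + \<mu> (A \<inter> B) \<le> \<mu> A + \<mu> B"
  shows "exchange_property (uminus ` int_bases \<mu>)"
  unfolding exchange_property_def
proof (intro ballI allI impI)
  fix f' g' a assume "f' \<in> uminus ` int_bases \<mu>" "g' \<in> uminus ` int_bases \<mu>" "g' a < f' a"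
  then obtain f g where f: "f \<in> int_bases \<mu>" and g: "g \<in> int_bases \<mu>"
    and fg': "f' = - f" "g' = - g" and "f a < g a"
    by auto
  then have f_indep: "int_independent \<mu> f"
    by (simp add: int_bases_def)
  define T where "T = \<Inter>{U. a \<in> U \<and> tight \<mu> f U}"
  have T_min: "T \<subseteq> U" if "a \<in> U" "tight \<mu> f U" for U
    using that by (auto simp: T_def)
  have "tight \<mu> f UNIV"
    using f by (simp add: tight_def int_bases_def)
  then have "tight \<mu> f T"
    unfolding T_def by (intro tight_Union_Inter[OF submod f_indep]) auto
  then have "sum g T \<le> sum f T"
    using g by (simp add: tight_def int_bases_def int_independent_def)
  moreover have "a \<in> T"
    by (auto simp: T_def)
  ultimately obtain b where "b \<in> T" "g b < f b"
    using ex_less_if_sum_le[of T a f g, OF finite] \<open>f a < g a\<close> by blast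
  moreover have "f - indicator {b} + indicator {a} \<in> int_bases \<mu>"
  proof (rule int_bases_swap[OF f])
    show "b \<noteq> a" "1 \<le> f b"
      using \<open>g b < f b\<close> \<open>f a < g a\<close> g by (auto simp: int_bases_def int_independent_def
          dest: spec[of _ b])
    show "\<forall>U. a \<in> U \<and> b \<notin> U \<longrightarrow> sum f U < \<mu> U"
      using T_min \<open>b \<in> T\<close> f
      by (force simp: tight_def int_bases_def int_independent_def order.order_iff_strict)
  qed
  moreover have "f' - indicator {a} + indicator {b} = - (f - indicator {b} + indicator {a})"
    using fg' by (simp add: algebra_simps)
  ultimately show "\<exists>b. f' b < g' b \<and> f' - indicator {a} + indicator {b} \<in> uminus ` int_bases \<mu>"
    using fg' by (metis image_eqI neg_less_iff_less uminus_apply)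
qed

lemma finite_int_bases: "finite (int_bases \<mu>)"
proof (rule finite_subset[OF _ finite_int_box])
  show "int_bases \<mu> \<subseteq> {f. \<forall>s. 0 \<le> f s \<and> f s \<le> \<mu> {s}}"
    by (auto simp: int_bases_def int_independent_def dest: spec[of _ "{_}"])
qed

lemma int_independent_saturate:
  assumes z: "int_independent \<mu> z" and zu: "\<forall>s. z s \<le> u s"
  obtains f where "\<forall>s. z s \<le> f s \<and> f s \<le> u s" "int_independent \<mu> f"
    "\<forall>s. f s < u s \<longrightarrow> (\<exists>U. s \<in> U \<and> tight \<mu> f U)"
proof -
  define A where "A = {f. (\<forall>s. z s \<le> f s \<and> f s \<le> u s) \<and> int_independent \<mu> f}"
  have "finite A"
    unfolding A_def by (rule finite_subset[OF _ finite_int_box]) auto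
  moreover have "z \<in> A"
    using z zu by (simp add: A_def)
  ultimately obtain f where "f \<in> A" and f_max: "\<forall>g\<in>A. \<not> sum f UNIV < sum g UNIV"
    using ex_is_arg_min_if_finite[of A "\<lambda>g. - sum g UNIV"] by (auto simp: is_arg_min_def)
  have "\<exists>U. s \<in> U \<and> tight \<mu> f U" if "f s < u s" for s
  proof (rule ccontr)
    assume no_tight: "\<not> ?thesis"
    have sum_inc: "sum (f + indicator {s}) U = sum f U + of_bool (s \<in> U)" for U
      by (simp add: sum.distrib sum_indicator_singleton)
    have "int_independent \<mu> (f + indicator {s})"
      unfolding int_independent_def
    proof (intro conjI allI)
      fix U
      have "sum f U \<le> \<mu> U" "s \<in> U \<longrightarrow> sum f U \<noteq> \<mu> U"
        using \<open>f \<in> A\<close> no_tight by (auto simp: A_def int_independent_def tight_def)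
      then show "sum (f + indicator {s}) U \<le> \<mu> U"
        unfolding sum_inc by auto
    qed (use \<open>f \<in> A\<close> in \<open>auto simp: A_def int_independent_def\<close>)
    moreover have "\<forall>t. z t \<le> (f + indicator {s}) t \<and> (f + indicator {s}) t \<le> u t"
      using \<open>f \<in> A\<close> that by (auto simp: A_def indicator_def intro: add_increasing2)
    ultimately have "f + indicator {s} \<in> A"
      by (simp add: A_def)
    then show False
      using f_max sum_inc[of UNIV] by auto
  qed
  with \<open>f \<in> A\<close> show thesis
    by (intro that[of f]) (auto simp: A_def)
qed

lemma inner_ind_UNIV_le_saturated:
  assumes submod: "\<forall>A B. \<mu> (A \<union> B) + \<mu> (A \<inter> B) \<le> \<mu> A + \<mu> B"
    and f: "int_independent \<mu> f" and fu: "\<forall>s. f s \<le> u s"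
    and saturated: "\<forall>s. f s < u s \<longrightarrow> (\<exists>U. s \<in> U \<and> tight \<mu> f U)"
    and y_le: "\<forall>U. y \<bullet> ind U \<le> of_int (\<mu> U)" and yu: "\<forall>s. y $ s \<le> of_int (u s)"
  shows "y \<bullet> ind UNIV \<le> of_int (sum f UNIV)"
proof -
  define W where "W = \<Union>{U. tight \<mu> f U}"
  have "(\<Sum>s\<in>W. y $ s) \<le> of_int (sum f W)"
  proof (cases "W = {}")
    case False
    then have "tight \<mu> f W"
      unfolding W_def by (intro tight_Union_Inter[OF submod f]) auto
    with y_le show ?thesis
      by (simp add: tight_def inner_ind)
  qed simp
  moreover have "f s = u s" if "s \<notin> W" for s
  proof (rule ccontr)
    assume "f s \<noteq> u s"
    with fu have "f s < u s"
      by (simp add: order.strict_iff_order)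
    with saturated that show False
      by (auto simp: W_def)
  qed
  then have "(\<Sum>s\<in>- W. y $ s) \<le> of_int (sum f (- W))"
    unfolding of_int_sum using yu by (intro sum_mono) auto
  ultimately show ?thesis
    by (simp add: inner_ind flip: sum_Compl_split[of _ W] of_int_sum)
qed

lemma exists_int_base_between:
  assumes submod: "\<forall>A B. \<mu> (A \<union> B) + \<mu> (A \<inter> B) \<le> \<mu> A + \<mu> B"
    and y: "y \<in> B_mu \<mu>" and ly: "\<forall>s. of_int (l s) \<le> y $ s" and yu: "\<forall>s. y $ s \<le> of_int (u s)"
  shows "\<exists>f\<in>int_bases \<mu>. \<forall>s. l s \<le> f s \<and> f s \<le> u s"
proof -
  have y_nonneg: "0 \<le> y $ s" and y_le: "\<forall>U. y \<bullet> ind U \<le> of_int (\<mu> U)"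
    and y_total: "y \<bullet> ind UNIV = of_int (\<mu> UNIV)" for s
    using y by (auto simp: B_mu_def P_mu_def)
  define z where "z s = max (l s) 0" for s
  have zy: "of_int (z s) \<le> y $ s" for s
    using ly y_nonneg by (auto simp: z_def max_def)
  have "int_independent \<mu> z"
    unfolding int_independent_def
  proof (intro conjI allI)
    fix U
    have "of_int (sum z U) \<le> y \<bullet> ind U"
      unfolding of_int_sum inner_ind by (intro sum_mono zy)
    with y_le show "sum z U \<le> \<mu> U"
      by (smt (verit) of_int_le_iff)
  qed (simp add: z_def)
  moreover have "\<forall>s. z s \<le> u s"
    using zy yu by (metis of_int_le_iff order.trans)
  ultimately obtain f where zfu: "\<forall>s. z s \<le> f s \<and> f s \<le> u s" and f: "int_independent \<mu> f"
    and saturated: "\<forall>s. f s < u s \<longrightarrow> (\<exists>U. s \<in> U \<and> tight \<mu> f U)"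
    by (rule int_independent_saturate)
  have "y \<bullet> ind UNIV \<le> of_int (sum f UNIV)"
    using zfu by (intro inner_ind_UNIV_le_saturated[OF submod f _ saturated y_le yu]) simp
  then have "\<mu> UNIV \<le> sum f UNIV"
    unfolding y_total of_int_le_iff .
  then have "sum f UNIV = \<mu> UNIV"
    using f by (simp add: int_independent_def order.antisym)
  with f have "f \<in> int_bases \<mu>"
    by (simp add: int_bases_def)
  moreover have "\<forall>s. l s \<le> f s \<and> f s \<le> u s"
    using zfu by (simp add: z_def)
  ultimately show ?thesis
    by blast
qed

lemma ex_B_mu_below_iff:
  assumes submod: "\<forall>A B. \<mu> (A \<union> B) + \<mu> (A \<inter> B) \<le> \<mu> A + \<mu> B"
  shows "(\<exists>y\<in>B_mu \<mu>. \<forall>s. y $ s \<le> of_int (h s)) \<longleftrightarrow> (\<exists>f\<in>int_bases \<mu>. \<forall>s. f s \<le> h s)"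
proof
  assume "\<exists>y\<in>B_mu \<mu>. \<forall>s. y $ s \<le> of_int (h s)"
  then obtain y where "y \<in> B_mu \<mu>" "\<forall>s. y $ s \<le> of_int (h s)"
    by blast
  moreover have "\<forall>s. of_int 0 \<le> y $ s"
    using \<open>y \<in> B_mu \<mu>\<close> by (simp add: B_mu_def P_mu_def)
  ultimately show "\<exists>f\<in>int_bases \<mu>. \<forall>s. f s \<le> h s"
    using exists_int_base_between[OF submod, of y "\<lambda>_. 0" h] by blast
next
  assume "\<exists>f\<in>int_bases \<mu>. \<forall>s. f s \<le> h s"
  then obtain f where "of_int_vec f \<in> B_mu \<mu>" "\<forall>s. f s \<le> h s"
    by (auto simp flip: of_int_vec_in_B_mu_iff)
  then show "\<exists>y\<in>B_mu \<mu>. \<forall>s. y $ s \<le> of_int (h s)"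
    by (intro bexI[of _ "of_int_vec f"]) auto
qed

lemma ex_B_mu_above_iff:
  assumes submod: "\<forall>A B. \<mu> (A \<union> B) + \<mu> (A \<inter> B) \<le> \<mu> A + \<mu> B"
  shows "(\<exists>y\<in>B_mu \<mu>. \<forall>s. of_int (h s) \<le> y $ s) \<longleftrightarrow> (\<exists>f\<in>int_bases \<mu>. \<forall>s. h s \<le> f s)"
proof
  assume "\<exists>y\<in>B_mu \<mu>. \<forall>s. of_int (h s) \<le> y $ s"
  then obtain y where "y \<in> B_mu \<mu>" "\<forall>s. of_int (h s) \<le> y $ s"
    by blast
  moreover have "\<forall>s. y $ s \<le> of_int (\<mu> {s})"
    using \<open>y \<in> B_mu \<mu>\<close> by (auto simp: B_mu_def P_mu_def inner_ind dest: spec[of _ "{_}"])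
  ultimately show "\<exists>f\<in>int_bases \<mu>. \<forall>s. h s \<le> f s"
    using exists_int_base_between[OF submod, of y h "\<lambda>s. \<mu> {s}"] by blast
next
  assume "\<exists>f\<in>int_bases \<mu>. \<forall>s. h s \<le> f s"
  then obtain f where "of_int_vec f \<in> B_mu \<mu>" "\<forall>s. h s \<le> f s"
    by (auto simp flip: of_int_vec_in_B_mu_iff)
  then show "\<exists>y\<in>B_mu \<mu>. \<forall>s. of_int (h s) \<le> y $ s"
    by (intro bexI[of _ "of_int_vec f"]) auto
qed

section \<open>Dilated simplices\<close>

lemma std_simplex_eq: "std_simplex = {x::real^'a::finite. (\<forall>s. 0 \<le> x $ s) \<and> sum (($) x) UNIV = 1}"
proof
  show "(std_simplex :: (real^'a) set) \<subseteq> {x. (\<forall>s. 0 \<le> x $ s) \<and> sum (($) x) UNIV = 1}"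
    unfolding std_simplex_def
    by (rule hull_minimal) (auto simp: ind_def convex_def sum.distrib simp flip: sum_distrib_left)
next
  show "{x. (\<forall>s. 0 \<le> x $ s) \<and> sum (($) x) UNIV = 1} \<subseteq> (std_simplex :: (real^'a) set)"
  proof
    fix x :: "real^'a" assume x: "x \<in> {x. (\<forall>s. 0 \<le> x $ s) \<and> sum (($) x) UNIV = 1}"
    have "x = (\<Sum>s\<in>UNIV. x $ s *\<^sub>R ind {s})"
      by (simp add: vec_eq_iff ind_def if_distrib cong: if_cong)
    also have "\<dots> \<in> std_simplex"
      unfolding std_simplex_def using x by (intro convex_sum) (auto intro: hull_inc)
    finally show "x \<in> std_simplex" .
  qed
qed

lemma scaled_std_simplex_eq:
  assumes "0 \<le> c"
  shows "(\<lambda>x. c *\<^sub>R x) ` std_simplex = {x::real^'a::finite. (\<forall>s. 0 \<le> x $ s) \<and> sum (($) x) UNIV = c}"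
proof (cases "c = 0")
  case True
  have "ind {undefined} \<in> (std_simplex :: (real^'a) set)"
    by (simp add: std_simplex_def hull_inc)
  moreover have "x = 0" if "\<forall>s. 0 \<le> x $ s" "sum (($) x) UNIV = 0" for x :: "real^'a"
    using that sum_nonneg_eq_0_iff[of UNIV "($) x"] by (simp add: vec_eq_iff)
  ultimately show ?thesis
    using True by auto
next
  case False
  with assms have "0 < c"
    by simp
  show ?thesis
  proof (intro equalityI subsetI)
    fix x assume "x \<in> (\<lambda>x. c *\<^sub>R x) ` std_simplex"
    then show "x \<in> {x. (\<forall>s. 0 \<le> x $ s) \<and> sum (($) x) UNIV = c}"
      using \<open>0 < c\<close> by (auto simp: std_simplex_eq simp flip: sum_distrib_left)
  next
    fix x assume "x \<in> {x::real^'a. (\<forall>s. 0 \<le> x $ s) \<and> sum (($) x) UNIV = c}"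
    then have "(1 / c) *\<^sub>R x \<in> std_simplex"
      using \<open>0 < c\<close> by (simp add: std_simplex_eq flip: sum_divide_distrib)
    moreover have "x = c *\<^sub>R ((1 / c) *\<^sub>R x)"
      using \<open>0 < c\<close> by simp
    ultimately show "x \<in> (\<lambda>x. c *\<^sub>R x) ` std_simplex"
      by (rule image_eqI[rotated])
  qed
qed

lemma inv_simplex_eq: "inv_simplex = uminus ` std_simplex"
  unfolding inv_simplex_def std_simplex_def
  by (simp add: convex_hull_linear_image[OF linear_uminus] image_image)

lemma mem_minkowski_scaled_std_simplex_iff:
  assumes "0 \<le> c"
  shows "x \<in> minkowski A ((\<lambda>v. c *\<^sub>R v) ` std_simplex)
     \<longleftrightarrow> (\<exists>y\<in>A. (\<forall>s. y $ s \<le> x $ s) \<and> sum (($) x) UNIV = sum (($) y) UNIV + c)"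
proof
  assume "x \<in> minkowski A ((\<lambda>v. c *\<^sub>R v) ` std_simplex)"
  then obtain y w where "y \<in> A" "\<forall>s. 0 \<le> w $ s" "sum (($) w) UNIV = c" "x = y + w"
    by (auto simp: minkowski_def scaled_std_simplex_eq[OF assms])
  then show "\<exists>y\<in>A. (\<forall>s. y $ s \<le> x $ s) \<and> sum (($) x) UNIV = sum (($) y) UNIV + c"
    by (intro bexI[of _ y]) (auto simp: sum.distrib)
next
  assume "\<exists>y\<in>A. (\<forall>s. y $ s \<le> x $ s) \<and> sum (($) x) UNIV = sum (($) y) UNIV + c"
  then obtain y where "y \<in> A" "\<forall>s. y $ s \<le> x $ s" "sum (($) x) UNIV = sum (($) y) UNIV + c"
    by blast
  then have "x - y \<in> (\<lambda>v. c *\<^sub>R v) ` std_simplex"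
    by (simp add: scaled_std_simplex_eq[OF assms] sum_subtractf)
  moreover have "x = y + (x - y)"
    by simp
  ultimately show "x \<in> minkowski A ((\<lambda>v. c *\<^sub>R v) ` std_simplex)"
    unfolding minkowski_def using \<open>y \<in> A\<close> by blast
qed

lemma mem_minkowski_scaled_inv_simplex_iff:
  assumes "0 \<le> c"
  shows "x \<in> minkowski A ((\<lambda>v. c *\<^sub>R v) ` inv_simplex)
     \<longleftrightarrow> (\<exists>y\<in>A. (\<forall>s. x $ s \<le> y $ s) \<and> sum (($) x) UNIV = sum (($) y) UNIV - c)"
proof -
  have scaled_inv: "(\<lambda>v. c *\<^sub>R v) ` inv_simplex = uminus ` (\<lambda>v. c *\<^sub>R v) ` std_simplex"
    by (simp add: inv_simplex_eq image_image)
  have "x \<in> minkowski A ((\<lambda>v. c *\<^sub>R v) ` inv_simplex)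
      \<longleftrightarrow> (\<exists>y\<in>A. y - x \<in> (\<lambda>v. c *\<^sub>R v) ` std_simplex)"
  proof
    assume "x \<in> minkowski A ((\<lambda>v. c *\<^sub>R v) ` inv_simplex)"
    then obtain y w where "y \<in> A" "w \<in> (\<lambda>v. c *\<^sub>R v) ` std_simplex" "x = y + - w"
      unfolding minkowski_def scaled_inv by blast
    then show "\<exists>y\<in>A. y - x \<in> (\<lambda>v. c *\<^sub>R v) ` std_simplex"
      by (intro bexI[of _ y]) simp_all
  next
    assume "\<exists>y\<in>A. y - x \<in> (\<lambda>v. c *\<^sub>R v) ` std_simplex"
    then obtain y where "y \<in> A" "y - x \<in> (\<lambda>v. c *\<^sub>R v) ` std_simplex"
      by blast
    moreover from this(2) have "- (y - x) \<in> (\<lambda>v. c *\<^sub>R v) ` inv_simplex"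
      unfolding scaled_inv by (rule imageI)
    moreover have "x = y + - (y - x)"
      by simp
    ultimately show "x \<in> minkowski A ((\<lambda>v. c *\<^sub>R v) ` inv_simplex)"
      unfolding minkowski_def by blast
  qed
  then show ?thesis
    by (auto simp: scaled_std_simplex_eq[OF assms] sum_subtractf)
qed

lemma integer_points_B_mu_plus_scaled_std_simplex:
  assumes submod: "\<forall>A B. \<mu> (A \<union> B) + \<mu> (A \<inter> B) \<le> \<mu> A + \<mu> B"
  shows "integer_points (minkowski (B_mu \<mu>) ((\<lambda>x. real k *\<^sub>R x) ` std_simplex))
    = of_int_vec ` {h. (\<exists>f\<in>int_bases \<mu>. \<forall>s. f s \<le> h s) \<and> sum h UNIV = \<mu> UNIV + int k}"
proof -
  have sum_eq_iff: "sum (($) (of_int_vec h)) UNIV = sum (($) y) UNIV + real k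
      \<longleftrightarrow> sum h UNIV = \<mu> UNIV + int k" if "y \<in> B_mu \<mu>" for y and h :: "'a::finite \<Rightarrow> int"
  proof -
    have "sum (($) y) UNIV = of_int (\<mu> UNIV)"
      using that by (simp add: B_mu_def inner_ind)
    then have "sum (($) (of_int_vec h)) UNIV = sum (($) y) UNIV + real k
        \<longleftrightarrow> real_of_int (sum h UNIV) = real_of_int (\<mu> UNIV + int k)"
      by simp
    then show ?thesis
      by (simp only: of_int_eq_iff)
  qed
  have "of_int_vec h \<in> minkowski (B_mu \<mu>) ((\<lambda>x. real k *\<^sub>R x) ` std_simplex)
      \<longleftrightarrow> (\<exists>f\<in>int_bases \<mu>. \<forall>s. f s \<le> h s) \<and> sum h UNIV = \<mu> UNIV + int k" for h
  proof -
    have "of_int_vec h \<in> minkowski (B_mu \<mu>) ((\<lambda>x. real k *\<^sub>R x) ` std_simplex)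
        \<longleftrightarrow> (\<exists>y\<in>B_mu \<mu>. (\<forall>s. y $ s \<le> of_int (h s))
          \<and> sum (($) (of_int_vec h)) UNIV = sum (($) y) UNIV + real k)"
      using mem_minkowski_scaled_std_simplex_iff[of "real k" "of_int_vec h"] by simp
    also have "\<dots> \<longleftrightarrow> (\<exists>y\<in>B_mu \<mu>. (\<forall>s. y $ s \<le> of_int (h s)) \<and> sum h UNIV = \<mu> UNIV + int k)"
      by (rule bex_cong[OF refl]) (use sum_eq_iff in blast)
    also have "\<dots> \<longleftrightarrow> (\<exists>f\<in>int_bases \<mu>. \<forall>s. f s \<le> h s) \<and> sum h UNIV = \<mu> UNIV + int k"
      using ex_B_mu_below_iff[OF submod, of h] by blast
    finally show ?thesis .
  qed
  then show ?thesis
    by (simp add: integer_points_eq_image)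
qed

lemma integer_points_B_mu_plus_scaled_inv_simplex:
  assumes submod: "\<forall>A B. \<mu> (A \<union> B) + \<mu> (A \<inter> B) \<le> \<mu> A + \<mu> B"
  shows "integer_points (minkowski (B_mu \<mu>) ((\<lambda>x. real k *\<^sub>R x) ` inv_simplex))
    = of_int_vec ` {h. (\<exists>f\<in>int_bases \<mu>. \<forall>s. h s \<le> f s) \<and> sum h UNIV = \<mu> UNIV - int k}"
proof -
  have sum_eq_iff: "sum (($) (of_int_vec h)) UNIV = sum (($) y) UNIV - real k
      \<longleftrightarrow> sum h UNIV = \<mu> UNIV - int k" if "y \<in> B_mu \<mu>" for y and h :: "'a::finite \<Rightarrow> int"
  proof -
    have "sum (($) y) UNIV = of_int (\<mu> UNIV)"
      using that by (simp add: B_mu_def inner_ind)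
    then have "sum (($) (of_int_vec h)) UNIV = sum (($) y) UNIV - real k
        \<longleftrightarrow> real_of_int (sum h UNIV) = real_of_int (\<mu> UNIV - int k)"
      by simp
    then show ?thesis
      by (simp only: of_int_eq_iff)
  qed
  have "of_int_vec h \<in> minkowski (B_mu \<mu>) ((\<lambda>x. real k *\<^sub>R x) ` inv_simplex)
      \<longleftrightarrow> (\<exists>f\<in>int_bases \<mu>. \<forall>s. h s \<le> f s) \<and> sum h UNIV = \<mu> UNIV - int k" for h
  proof -
    have "of_int_vec h \<in> minkowski (B_mu \<mu>) ((\<lambda>x. real k *\<^sub>R x) ` inv_simplex)
        \<longleftrightarrow> (\<exists>y\<in>B_mu \<mu>. (\<forall>s. of_int (h s) \<le> y $ s)
          \<and> sum (($) (of_int_vec h)) UNIV = sum (($) y) UNIV - real k)"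
      using mem_minkowski_scaled_inv_simplex_iff[of "real k" "of_int_vec h"] by simp
    also have "\<dots> \<longleftrightarrow> (\<exists>y\<in>B_mu \<mu>. (\<forall>s. of_int (h s) \<le> y $ s) \<and> sum h UNIV = \<mu> UNIV - int k)"
      by (rule bex_cong[OF refl]) (use sum_eq_iff in blast)
    also have "\<dots> \<longleftrightarrow> (\<exists>f\<in>int_bases \<mu>. \<forall>s. h s \<le> f s) \<and> sum h UNIV = \<mu> UNIV - int k"
      using ex_B_mu_above_iff[OF submod, of h] by blast
    finally show ?thesis .
  qed
  then show ?thesis
    by (simp add: integer_points_eq_image)
qed

lemma card_integer_points_plus_scaled_std_simplex:
  fixes \<mu> :: "'a::{finite,linorder} set \<Rightarrow> int"
  assumes submod: "\<forall>A B. \<mu> (A \<union> B) + \<mu> (A \<inter> B) \<le> \<mu> A + \<mu> B"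
  shows "card (integer_points (minkowski (B_mu \<mu>) ((\<lambda>x. real k *\<^sub>R x) ` std_simplex)))
    = (\<Sum>f\<in>int_bases \<mu>. (k + card {s. externally_active (int_bases \<mu>) f s} - 1) choose k)"
  by (simp add: integer_points_B_mu_plus_scaled_std_simplex[OF submod] card_image
      inj_on_subset[OF inj_of_int_vec] sum_int_bases finite_int_bases
      card_int_funs_above_exchange_set[OF exchange_property_int_bases[OF submod]])

lemma card_integer_points_plus_scaled_inv_simplex:
  fixes \<mu> :: "'a::{finite,linorder} set \<Rightarrow> int"
  assumes submod: "\<forall>A B. \<mu> (A \<union> B) + \<mu> (A \<inter> B) \<le> \<mu> A + \<mu> B"
  shows "card (integer_points (minkowski (B_mu \<mu>) ((\<lambda>x. real k *\<^sub>R x) ` inv_simplex)))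
    = (\<Sum>f\<in>int_bases \<mu>. (k + card {s. externally_active (uminus ` int_bases \<mu>) (- f) s} - 1) choose k)"
  by (simp add: integer_points_B_mu_plus_scaled_inv_simplex[OF submod] card_image
      inj_on_subset[OF inj_of_int_vec] sum_int_bases finite_int_bases
      card_int_funs_below_exchange_set[OF exchange_property_uminus_int_bases[OF submod]])

section \<open>Interior and exterior polynomials\<close>

lemma int_active_of_int_vec:
  "int_active \<mu> (of_int_vec f) = externally_active (uminus ` int_bases \<mu>) (- f)"
proof
  fix s
  have "of_int_vec f - ind {s} + ind {s'} \<in> bases \<mu>
      \<longleftrightarrow> - f + indicator {s} - indicator {s'} \<in> uminus ` int_bases \<mu>" for s'
  proof -
    have "- (- f + indicator {s} - indicator {s'}) = f - indicator {s} + indicator {s'}"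
      by (simp add: algebra_simps)
    then show ?thesis
      by (simp only: mem_uminus_image_iff of_int_vec_in_bases_iff
          flip: of_int_vec_indicator of_int_vec_diff of_int_vec_add)
  qed
  then show "int_active \<mu> (of_int_vec f) s = externally_active (uminus ` int_bases \<mu>) (- f) s"
    by (simp add: int_active_def externally_active_def)
qed

lemma ext_active_of_int_vec:
  "ext_active \<mu> (of_int_vec f) = externally_active (int_bases \<mu>) f"
  by (simp add: fun_eq_iff ext_active_def externally_active_def of_int_vec_in_bases_iff
      flip: of_int_vec_indicator of_int_vec_diff of_int_vec_add)

lemma interior_poly_eq:
  "interior_poly \<mu>
    = (\<Sum>f\<in>int_bases \<mu>. monom 1 (CARD('a) - card {s. externally_active (uminus ` int_bases \<mu>) (- f) s}))"
  for \<mu> :: "'a::{finite,linorder} set \<Rightarrow> int"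
  by (simp add: interior_poly_def iota_bar_def bases_eq sum.reindex inj_on_subset[OF inj_of_int_vec]
      int_active_of_int_vec)

lemma exterior_poly_eq:
  "exterior_poly \<mu> = (\<Sum>f\<in>int_bases \<mu>. monom 1 (CARD('a) - card {s. externally_active (int_bases \<mu>) f s}))"
  for \<mu> :: "'a::{finite,linorder} set \<Rightarrow> int"
  by (simp add: exterior_poly_def eps_bar_def bases_eq sum.reindex inj_on_subset[OF inj_of_int_vec]
      ext_active_of_int_vec)

lemma sum_coeff_sum_monom:
  fixes w :: "nat \<Rightarrow> 'b::comm_semiring_1"
  assumes "\<forall>f\<in>F. d f < n"
  shows "(\<Sum>j<n. coeff (\<Sum>f\<in>F. monom 1 (d f)) j * w j) = (\<Sum>f\<in>F. w (d f))"
proof -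
  have "(\<Sum>j<n. coeff (\<Sum>f\<in>F. monom 1 (d f)) j * w j) = (\<Sum>j<n. \<Sum>f\<in>F. if d f = j then w j else 0)"
    unfolding coeff_sum coeff_monom sum_distrib_right by (intro sum.cong) auto
  also have "\<dots> = (\<Sum>f\<in>F. \<Sum>j<n. if d f = j then w j else 0)"
    by (rule sum.swap)
  also have "\<dots> = (\<Sum>f\<in>F. w (d f))"
    using assms by (intro sum.cong) (simp_all add: sum.delta)
  finally show ?thesis .
qed

lemma sum_coeff_activity_poly:
  fixes act :: "'c \<Rightarrow> 'a::{finite,linorder} set"
  assumes "\<forall>f\<in>F. Min UNIV \<in> act f"
  shows "(\<Sum>j<CARD('a). coeff (\<Sum>f\<in>F. monom 1 (CARD('a) - card (act f))) j
            * int ((k + CARD('a) - 1 - j) choose (CARD('a) - 1 - j)))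
         = (\<Sum>f\<in>F. int ((k + card (act f) - 1) choose k))"
proof -
  have card_act: "1 \<le> card (act f)" "card (act f) \<le> CARD('a)" if "f \<in> F" for f
    using assms that card_gt_0_iff[of "act f"] by (auto simp: card_mono)
  have "(\<Sum>j<CARD('a). coeff (\<Sum>f\<in>F. monom 1 (CARD('a) - card (act f))) j
            * int ((k + CARD('a) - 1 - j) choose (CARD('a) - 1 - j)))
      = (\<Sum>f\<in>F. int ((k + CARD('a) - 1 - (CARD('a) - card (act f)))
            choose (CARD('a) - 1 - (CARD('a) - card (act f)))))"
  proof (rule sum_coeff_sum_monom, intro ballI)
    fix f assume "f \<in> F"
    from card_act[OF this] show "CARD('a) - card (act f) < CARD('a)"
      by linarith
  qed
  also have "\<dots> = (\<Sum>f\<in>F. int ((k + card (act f) - 1) choose k))"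
  proof (rule sum.cong[OF refl])
    fix f assume "f \<in> F"
    define m where "m = card (act f)"
    from card_act[OF \<open>f \<in> F\<close>] have "1 \<le> m" "m \<le> CARD('a)"
      by (simp_all add: m_def)
    then have "k + CARD('a) - 1 - (CARD('a) - m) = k + m - 1"
      "CARD('a) - 1 - (CARD('a) - m) = (k + m - 1) - k"
      by auto
    moreover have "(k + m - 1) choose ((k + m - 1) - k) = (k + m - 1) choose k"
      using \<open>1 \<le> m\<close> by (intro binomial_symmetric[symmetric]) simp
    ultimately show "int ((k + CARD('a) - 1 - (CARD('a) - card (act f)))
            choose (CARD('a) - 1 - (CARD('a) - card (act f))))
        = int ((k + card (act f) - 1) choose k)"
      by (simp only: m_def)
  qed
  finally show ?thesis .
qed

theorem theorem2p10:
  fixes \<mu> :: "'a::{finite,linorder} set \<Rightarrow> int" and k :: nat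
  assumes submod: "\<forall>A B. \<mu> (A \<union> B) + \<mu> (A \<inter> B) \<le> \<mu> A + \<mu> B"
    and nondecr: "\<forall>A B. A \<subseteq> B \<longrightarrow> \<mu> A \<le> \<mu> B"
  shows "int (card (integer_points (minkowski (B_mu \<mu>) ((\<lambda>x. real k *\<^sub>R x) ` inv_simplex))))
           = (\<Sum>j<CARD('a). coeff (interior_poly \<mu>) j
                 * int ((k + CARD('a) - 1 - j) choose (CARD('a) - 1 - j)))
         \<and> int (card (integer_points (minkowski (B_mu \<mu>) ((\<lambda>x. real k *\<^sub>R x) ` std_simplex))))
           = (\<Sum>j<CARD('a). coeff (exterior_poly \<mu>) j
                 * int ((k + CARD('a) - 1 - j) choose (CARD('a) - 1 - j)))"
proof
  show "int (card (integer_points (minkowski (B_mu \<mu>) ((\<lambda>x. real k *\<^sub>R x) ` inv_simplex))))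
      = (\<Sum>j<CARD('a). coeff (interior_poly \<mu>) j
          * int ((k + CARD('a) - 1 - j) choose (CARD('a) - 1 - j)))"
    unfolding card_integer_points_plus_scaled_inv_simplex[OF submod] of_nat_sum interior_poly_eq
    by (rule sum_coeff_activity_poly[symmetric]) (simp add: externally_active_Min)
  show "int (card (integer_points (minkowski (B_mu \<mu>) ((\<lambda>x. real k *\<^sub>R x) ` std_simplex))))
      = (\<Sum>j<CARD('a). coeff (exterior_poly \<mu>) j
          * int ((k + CARD('a) - 1 - j) choose (CARD('a) - 1 - j)))"
    unfolding card_integer_points_plus_scaled_std_simplex[OF submod] of_nat_sum exterior_poly_eq
    by (rule sum_coeff_activity_poly[symmetric]) (simp add: externally_active_Min)
qed

end
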